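(* Let $\mathcal{C}=\{C_1,\ldots,C_r\}$ be a partition of $C=[n]$. Suppose $q$ and all $q^{C_j}$ are symmetric, i.e. $q(A)=1/\binom{n}{|A|}$ and $q^{C_j}(A_j)=1/\binom{n_j}{|A_j|}$. Consider a system consisting of $r$ modules $(C_j,\chi_j)$ (each $\chi_j$ semicoherent) connected in series, i.e. $\phi(\mathbf{x})=\prod_{j=1}^r\chi_j(\mathbf{x}^{C_j})$. Then for every $0\le k\le n$, $$\overline{P}_{n-k}=\sum_{\substack{0\le a_j\le n_j\\ a_1+\cdots+a_r=k}}\frac{\binom{n_1}{a_1}\cdots\binom{n_r}{a_r}}{\binom{n}{k}}\prod_{j=1}^r\overline{P}_{j,n_j-a_j}.$$
   Context: Consider components $C=[n]$ with random lifetimes $T_1,\ldots,T_n$ whose joint distribution has no ties. Subsets are identified with Boolean vectors. A structure is semicoherent if it is nondecreasing in each variable, maps $\mathbf{0}$ to $0$ and $\mathbf{1}$ to $1$. The relative quality function is $q(A)=\Pr(\max_{i\notin A}T_i<\min_{i\in A}T_i)$, with $q(\varnothing)=q([n])=1$. For a partition into nonempty blocks $C_j$, write $n_j=|C_j|$, $A_j=A\cap C_j$, $\mathbf{x}^{C_j}=(x_i)_{i\in C_j}$, and $q^{C_j}(A)=\Pr(\max_{i\in C_j\setminus A}T_i<\min_{i\in A}T_i)$ for $A\subseteq C_j$. The tail probability signatures are $\overline{P}_k=\sum_{|A|=n-k}q(A)\phi(A)$ for the system and $\overline{P}_{j,k}=\sum_{A\subseteq C_j,|A|=n_j-k}q^{C_j}(A)\chi_j(A)$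 for module $j$. *)

theory Defs
  imports Complex_Main "HOL-Library.FuncSet"
begin

text \<open>Subsets of a component set S are identified with Boolean vectors.
  A structure on S is a function from subsets of S to bool (working/failed).\<close>

definition semicoherent :: "'a set \<Rightarrow> ('a set \<Rightarrow> bool) \<Rightarrow> bool" where
  "semicoherent S f \<longleftrightarrow>
     (\<forall>A B. A \<subseteq> B \<and> B \<subseteq> S \<and> f A \<longrightarrow> f B) \<and> \<not> f {} \<and> f S"

definition tail_sig :: "'a set \<Rightarrow> ('a set \<Rightarrow> real) \<Rightarrow> ('a set \<Rightarrow> bool) \<Rightarrow> nat \<Rightarrow> real" where
  "tail_sig S q f k = (\<Sum>A\<in>{A. A \<subseteq> S \<and> card A = card S - k}. q A * of_bool (f A))"

end

theory Submission
  imports Defs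
begin

(* When q is symmetric, q(A) depends only on |A|, so the tail signature
   counts working sets:  P_{|S|-m} = #{A \<subseteq> S. |A| = m, f A} / (|S| choose m).
   For a series system, a subset A of C = C_1 \<union> ... \<union> C_r works iff every trace
   A \<inter> C_j works for chi_j, and A \<mapsto> (A \<inter> C_j)_j is a bijection between the working
   k-subsets of C and the tuples of working a_j-subsets of the blocks with
   a_1 + ... + a_r = k.  Hence the number of working k-sets is a sum over such
   (a_j) of products of blockwise counts (a generalised Vandermonde identity).
   Rewriting each blockwise count as (n_j choose a_j) * P_{j,n_j-a_j} gives the theorem. *)

definition working_sets :: "'a set \<Rightarrow> ('a set \<Rightarrow> bool) \<Rightarrow> nat \<Rightarrow> 'a set set" where
  "working_sets S f m = {A. A \<subseteq> S \<and> card A = m \<and> f A}"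

lemma finite_working_sets: "finite S \<Longrightarrow> finite (working_sets S f m)"
  unfolding working_sets_def by (rule finite_subset[of _ "Pow S"]) auto

lemma card_eq_sum_card_traces:
  assumes fI: "finite I" and fC: "\<And>i. i \<in> I \<Longrightarrow> finite (C i)"
    and disj: "\<And>i j. i \<in> I \<Longrightarrow> j \<in> I \<Longrightarrow> i \<noteq> j \<Longrightarrow> C i \<inter> C j = {}"
    and A: "A \<subseteq> (\<Union>i\<in>I. C i)"
  shows "card A = (\<Sum>i\<in>I. card (A \<inter> C i))"
proof -
  have "A = (\<Union>i\<in>I. A \<inter> C i)" using A by auto
  hence "card A = card (\<Union>i\<in>I. A \<inter> C i)" by simp
  also have "\<dots> = (\<Sum>i\<in>I. card (A \<inter> C i))"
    by (rule card_UN_disjoint) (use fI fC disj in auto)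
  finally show ?thesis .
qed

lemma traces_bij:
  assumes fI: "finite I" and fC: "\<And>i. i \<in> I \<Longrightarrow> finite (C i)"
    and disj: "\<And>i j. i \<in> I \<Longrightarrow> j \<in> I \<Longrightarrow> i \<noteq> j \<Longrightarrow> C i \<inter> C j = {}"
  shows "bij_betw (\<lambda>A. restrict (\<lambda>i. A \<inter> C i) I)
           (working_sets (\<Union>i\<in>I. C i) (\<lambda>A. \<forall>i\<in>I. P i (A \<inter> C i)) k)
           (\<Union>a\<in>{a \<in> (\<Pi>\<^sub>E i\<in>I. {0..card (C i)}). sum a I = k}. \<Pi>\<^sub>E i\<in>I. working_sets (C i) (P i) (a i))"
    (is "bij_betw ?g ?X ?Y")
proof (rule bij_betw_imageI)
  have card_traces: "card A = (\<Sum>i\<in>I. card (A \<inter> C i))" if "A \<subseteq> (\<Union>i\<in>I. C i)" for A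
    using fI fC disj that by (rule card_eq_sum_card_traces)
  show "inj_on ?g ?X"
  proof (rule inj_onI)
    fix A B assume A: "A \<in> ?X" and B: "B \<in> ?X" and eq: "?g A = ?g B"
    have "A = (\<Union>i\<in>I. ?g A i)" using A by (auto simp: working_sets_def)
    also have "\<dots> = (\<Union>i\<in>I. ?g B i)" using eq by simp
    also have "\<dots> = B" using B by (auto simp: working_sets_def)
    finally show "A = B" .
  qed
  show "?g ` ?X = ?Y"
  proof
    show "?g ` ?X \<subseteq> ?Y"
    proof
      fix h assume "h \<in> ?g ` ?X"
      then obtain A where A: "A \<in> ?X" and h: "h = ?g A" by auto
      define a where "a = restrict (\<lambda>i. card (A \<inter> C i)) I"
      have "a \<in> {a \<in> (\<Pi>\<^sub>E i\<in>I. {0..card (C i)}). sum a I = k}"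
        using A card_traces fC
        by (auto simp: a_def working_sets_def intro!: card_mono)
      moreover have "h \<in> (\<Pi>\<^sub>E i\<in>I. working_sets (C i) (P i) (a i))"
        using A by (auto simp: h a_def working_sets_def)
      ultimately show "h \<in> ?Y" by auto
    qed
    show "?Y \<subseteq> ?g ` ?X"
    proof
      fix h assume "h \<in> ?Y"
      then obtain a where a: "a \<in> (\<Pi>\<^sub>E i\<in>I. {0..card (C i)})" "sum a I = k"
        and h: "h \<in> (\<Pi>\<^sub>E i\<in>I. working_sets (C i) (P i) (a i))" by auto
      define A where "A = (\<Union>i\<in>I. h i)"
      have sub: "h i \<subseteq> C i" if "i \<in> I" for i
        using h that by (auto simp: working_sets_def)
      have trace: "A \<inter> C i = h i" if "i \<in> I" for i
        using sub disj that unfolding A_def by blast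
      have AU: "A \<subseteq> (\<Union>i\<in>I. C i)" using sub unfolding A_def by auto
      have "card A = (\<Sum>i\<in>I. card (h i))" using card_traces[OF AU] trace by simp
      also have "\<dots> = sum a I"
        using h by (auto simp: working_sets_def intro: sum.cong)
      also have "\<dots> = k" using a(2) .
      finally have "A \<in> ?X" using AU trace h by (auto simp: working_sets_def)
      moreover have "?g A = h" using h trace
        by (auto simp: PiE_def extensional_def fun_eq_iff)
      ultimately show "h \<in> ?g ` ?X" by blast
    qed
  qed
qed

lemma card_working_sets_blockwise:
  assumes fI: "finite I" and fC: "\<And>i. i \<in> I \<Longrightarrow> finite (C i)"
    and disj: "\<And>i j. i \<in> I \<Longrightarrow> j \<in> I \<Longrightarrow> i \<noteq> j \<Longrightarrow> C i \<inter> C j = {}"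
  shows "card (working_sets (\<Union>i\<in>I. C i) (\<lambda>A. \<forall>i\<in>I. P i (A \<inter> C i)) k)
    = (\<Sum>a\<in>{a \<in> (\<Pi>\<^sub>E i\<in>I. {0..card (C i)}). sum a I = k}.
         \<Prod>i\<in>I. card (working_sets (C i) (P i) (a i)))"
proof -
  define Idx where "Idx = {a \<in> (\<Pi>\<^sub>E i\<in>I. {0..card (C i)}). sum a I = k}"
  define G where "G a = (\<Pi>\<^sub>E i\<in>I. working_sets (C i) (P i) (a i))" for a
  have "finite Idx"
    unfolding Idx_def using fI by (auto intro: finite_subset[OF _ finite_PiE])
  moreover have "finite (G a)" for a
    using fI fC by (auto simp: G_def intro!: finite_PiE finite_working_sets)
  moreover have "G a \<inter> G b = {}" if "a \<in> Idx" "b \<in> Idx" "a \<noteq> b" for a b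
  proof (rule ccontr)
    assume "G a \<inter> G b \<noteq> {}"
    then obtain h where ha: "h \<in> G a" and hb: "h \<in> G b" by blast
    have "a i = b i" for i
    proof (cases "i \<in> I")
      case True
      then show ?thesis using PiE_mem[OF ha[unfolded G_def] True] PiE_mem[OF hb[unfolded G_def] True]
        by (simp add: working_sets_def)
    next
      case False
      then show ?thesis using that(1,2) by (auto simp: Idx_def PiE_def extensional_def)
    qed
    with \<open>a \<noteq> b\<close> show False by auto
  qed
  ultimately have "card (\<Union>a\<in>Idx. G a) = (\<Sum>a\<in>Idx. card (G a))"
    by (intro card_UN_disjoint) auto
  moreover have "card (G a) = (\<Prod>i\<in>I. card (working_sets (C i) (P i) (a i)))" for a
    by (simp add: G_def card_PiE fI)
  ultimately show ?thesis
    using bij_betw_same_card[OF traces_bij[OF fI fC disj, where k=k and P=P]]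
    by (simp add: Idx_def G_def)
qed

lemma tail_sig_symmetric:
  assumes fS: "finite S" and m: "m \<le> card S"
    and q_sym: "\<And>A. A \<subseteq> S \<Longrightarrow> q A = 1 / real (card S choose card A)"
  shows "tail_sig S q f (card S - m) = real (card (working_sets S f m)) / real (card S choose m)"
proof -
  let ?Sm = "{A. A \<subseteq> S \<and> card A = m}"
  have "tail_sig S q f (card S - m) = (\<Sum>A\<in>?Sm. 1 / real (card S choose m) * of_bool (f A))"
    unfolding tail_sig_def using m by (intro sum.cong) (auto simp: q_sym)
  also have "\<dots> = 1 / real (card S choose m) * (\<Sum>A\<in>?Sm. of_bool (f A))"
    by (simp add: sum_distrib_left)
  also have "(\<Sum>A\<in>?Sm. of_bool (f A) :: real) = real (card (?Sm \<inter> {A. f A}))"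
    using fS by (intro sum_of_bool_eq) auto
  also have "?Sm \<inter> {A. f A} = working_sets S f m" by (auto simp: working_sets_def)
  finally show ?thesis by simp
qed

theorem mainTheorem9:
  fixes n r :: nat
    and C :: "nat \<Rightarrow> nat set"
    and q :: "nat set \<Rightarrow> real"
    and qC :: "nat \<Rightarrow> nat set \<Rightarrow> real"
    and chi :: "nat \<Rightarrow> nat set \<Rightarrow> bool"
    and phi :: "nat set \<Rightarrow> bool"
    and k :: nat
  assumes blocks_nonempty: "\<And>j. j \<in> {1..r} \<Longrightarrow> C j \<noteq> {}"
    and blocks_disjoint: "\<And>i j. i \<in> {1..r} \<Longrightarrow> j \<in> {1..r} \<Longrightarrow> i \<noteq> j \<Longrightarrow> C i \<inter> C j = {}"
    and blocks_cover: "(\<Union>j\<in>{1..r}. C j) = {1..n}"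
    and q_sym: "\<And>A. A \<subseteq> {1..n} \<Longrightarrow> q A = 1 / real (n choose card A)"
    and qC_sym: "\<And>j A. j \<in> {1..r} \<Longrightarrow> A \<subseteq> C j \<Longrightarrow> qC j A = 1 / real (card (C j) choose card A)"
    and chi_semicoherent: "\<And>j. j \<in> {1..r} \<Longrightarrow> semicoherent (C j) (chi j)"
    and series: "\<And>A. A \<subseteq> {1..n} \<Longrightarrow> phi A = (\<forall>j\<in>{1..r}. chi j (A \<inter> C j))"
    and k_le: "k \<le> n"
  shows "tail_sig {1..n} q phi (n - k) =
    (\<Sum>a\<in>{a \<in> (\<Pi>\<^sub>E j\<in>{1..r}. {0..card (C j)}). (\<Sum>j=1..r. a j) = k}.
       (\<Prod>j=1..r. real (card (C j) choose a j)) / real (n choose k)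
       * (\<Prod>j=1..r. tail_sig (C j) (qC j) (chi j) (card (C j) - a j)))"
proof -
  let ?I = "{1..r}" and ?W = "\<lambda>j m. card (working_sets (C j) (chi j) m)"
  have fC: "finite (C j)" if "j \<in> ?I" for j
    using blocks_cover that by (metis UN_upper finite_atLeastAtMost finite_subset)
  have "working_sets {1..n} phi k
      = working_sets (\<Union>j\<in>?I. C j) (\<lambda>A. \<forall>j\<in>?I. chi j (A \<inter> C j)) k"
    using series blocks_cover by (auto simp: working_sets_def)
  hence system_count: "tail_sig {1..n} q phi (n - k)
      = real (\<Sum>a\<in>{a \<in> (\<Pi>\<^sub>E j\<in>?I. {0..card (C j)}). (\<Sum>j=1..r. a j) = k}. \<Prod>j=1..r. ?W j (a j))
        / real (n choose k)"
    using tail_sig_symmetric[of "{1..n}" k q phi] k_le q_sym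
      card_working_sets_blockwise[of ?I C chi k] fC blocks_disjoint by simp
  have module_count: "(\<Prod>j=1..r. real (card (C j) choose a j))
        * (\<Prod>j=1..r. tail_sig (C j) (qC j) (chi j) (card (C j) - a j))
      = (\<Prod>j=1..r. real (?W j (a j)))"
    if "a \<in> {a \<in> (\<Pi>\<^sub>E j\<in>?I. {0..card (C j)}). (\<Sum>j=1..r. a j) = k}" for a
    unfolding prod.distrib[symmetric]
  proof (rule prod.cong[OF refl])
    fix j assume j: "j \<in> ?I"
    hence "a j \<le> card (C j)" using that by auto
    thus "real (card (C j) choose a j) * tail_sig (C j) (qC j) (chi j) (card (C j) - a j)
        = real (?W j (a j))"
      using tail_sig_symmetric[OF fC[OF j], of "a j" "qC j" "chi j"] qC_sym[OF j] by simp
  qed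
  show ?thesis
    unfolding system_count of_nat_sum of_nat_prod sum_divide_distrib
    by (rule sum.cong[OF refl]) (simp only: module_count times_divide_eq_left)
qed

end
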